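(* Let $W\in\{\mathrm{A}_{\frac12\infty},\mathrm{D}_{\frac12\infty}\}$, let $C_W$ be the set of critical points of $f_W:\mathbb{C}^2\to\mathbb{C}$, and put $C_{W,0}=C_W\cap f_W^{-1}(0)$, $C_{W,1}=C_W\cap f_W^{-1}(1)$. Then: (i) $C_W\subset\mathbb{R}^2$; (ii) at every critical point the Hessian of $f_W|_{\mathbb{R}^2}$ is non-degenerate; it is indefinite at points of $C_{W,0}$ and negative definite at points of $C_{W,1}$; (iii) $C_{W,0}$ is exactly the set of nodes of the real curve $X_{W,0,\mathbb{R}}:=\mathbb{R}^2\cap f_W^{-1}(0)$, and the map $c\mapsto B_c:=$ (the bounded connected component of $\mathbb{R}^2\setminus X_{W,0,\mathbb{R}}$ containing $c$) is a bijection from $C_{W,1}$ onto the set of bounded connected components of $\mathbb{R}^2\setminus X_{W,0,\mathbb{R}}$.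
   Context: Let $s(x)=\frac{\sin\sqrt{x}}{\sqrt{x}}=\prod_{n\ge1}\big(1-\frac{x}{n^2\pi^2}\big)$ and $c(x)=\cos\sqrt{x}=\prod_{n\ge1}\big(1-\frac{4x}{(2n-1)^2\pi^2}\big)$. Define $f_{\mathrm{A}_{\frac12\infty}}(x,y)=xs(x)^2-y^2$ and $f_{\mathrm{D}_{\frac12\infty}}(x,y)=xs(x)^2-xy^2$ on $\mathbb{C}^2$; they are real on $\mathbb{R}^2$. A node of the real curve $X_{W,0,\mathbb{R}}$ is a point of it at which two local smooth irreducible branches cross transversally. *)

theory Defs
  imports "HOL-Analysis.Analysis"
begin

text \<open>s(x) = sin(sqrt x)/sqrt x, an entire function (value 1 at 0; independent of the branch of sqrt).\<close>
definition s_fun :: "complex \<Rightarrow> complex" where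
  "s_fun z = (if z = 0 then 1 else sin (csqrt z) / csqrt z)"

datatype W_type = A_half_inf | D_half_inf

definition f_W :: "W_type \<Rightarrow> complex \<times> complex \<Rightarrow> complex" where
  "f_W W p = (case W of
      A_half_inf \<Rightarrow> fst p * (s_fun (fst p))\<^sup>2 - (snd p)\<^sup>2
    | D_half_inf \<Rightarrow> fst p * (s_fun (fst p))\<^sup>2 - fst p * (snd p)\<^sup>2)"

definition crit_W :: "W_type \<Rightarrow> (complex \<times> complex) set" where
  "crit_W W = {p. (f_W W has_derivative (\<lambda>_. 0)) (at p)}"

text \<open>The real plane R^2 inside C^2, and the restriction of f_W to it (real-valued there).\<close>
definition realpt :: "real \<times> real \<Rightarrow> complex \<times> complex" where
  "realpt q = (complex_of_real (fst q), complex_of_real (snd q))"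

definition fR_W :: "W_type \<Rightarrow> real \<times> real \<Rightarrow> real" where
  "fR_W W q = Re (f_W W (realpt q))"

definition pd :: "nat \<Rightarrow> (real \<times> real \<Rightarrow> real) \<Rightarrow> real \<times> real \<Rightarrow> real" where
  "pd i g q = (if i = 1 then deriv (\<lambda>t. g (t, snd q)) (fst q)
               else deriv (\<lambda>t. g (fst q, t)) (snd q))"

definition hessian :: "(real \<times> real \<Rightarrow> real) \<Rightarrow> real \<times> real \<Rightarrow> real^2^2" where
  "hessian g q = (\<chi> i j. pd (if i = 1 then 1 else 2) (pd (if j = 1 then 1 else 2) g) q)"

definition nondegenerate :: "real^2^2 \<Rightarrow> bool" where
  "nondegenerate H \<longleftrightarrow> det H \<noteq> 0"

definition indefinite :: "real^2^2 \<Rightarrow> bool" where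
  "indefinite H \<longleftrightarrow> (\<exists>v. v \<bullet> (H *v v) > 0) \<and> (\<exists>w. w \<bullet> (H *v w) < 0)"

definition neg_definite :: "real^2^2 \<Rightarrow> bool" where
  "neg_definite H \<longleftrightarrow> (\<forall>v. v \<noteq> 0 \<longrightarrow> v \<bullet> (H *v v) < 0)"

definition XR_W :: "W_type \<Rightarrow> (real \<times> real) set" where
  "XR_W W = {q. f_W W (realpt q) = 0}"

definition branch :: "(real \<Rightarrow> real \<times> real) \<Rightarrow> real \<Rightarrow> real \<times> real \<Rightarrow> bool" where
  "branch \<gamma> e p \<longleftrightarrow> e > 0 \<and> \<gamma> C1_differentiable_on {-e<..<e} \<and> inj_on \<gamma> {-e<..<e} \<and>
     \<gamma> 0 = p \<and> (\<forall>t\<in>{-e<..<e}. vector_derivative \<gamma> (at t) \<noteq> 0)"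

definition is_node :: "(real \<times> real) set \<Rightarrow> real \<times> real \<Rightarrow> bool" where
  "is_node X p \<longleftrightarrow> p \<in> X \<and> (\<exists>U e \<gamma>1 \<gamma>2. open U \<and> p \<in> U \<and> branch \<gamma>1 e p \<and> branch \<gamma>2 e p \<and>
     \<gamma>1 ` {-e<..<e} \<subseteq> U \<and> \<gamma>2 ` {-e<..<e} \<subseteq> U \<and>
     X \<inter> U = \<gamma>1 ` {-e<..<e} \<union> \<gamma>2 ` {-e<..<e} \<and>
     (let v = vector_derivative \<gamma>1 (at 0); w = vector_derivative \<gamma>2 (at 0)
      in fst v * snd w - snd v * fst w \<noteq> 0))"

end

theory Submission
  imports Defs "HOL-Complex_Analysis.Complex_Analysis"
begin

text \<open>
  The entire function \<open>s\<close> is real on \<open>\<real>\<close>, and \<open>g x = x s(x)\<^sup>2 = sin\<^sup>2 (sqrt x)\<close> has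
  derivative \<open>s (4 x)\<close>. Hence the critical points of \<open>f_W\<close> are the real points
  \<open>((m \<pi> / 2)\<^sup>2, 0)\<close>, \<open>m \<ge> 1\<close>, together with \<open>(0, \<plusminus>1)\<close> for \<open>D\<close>; there \<open>f_W\<close> is \<open>0\<close> for even
  and \<open>1\<close> for odd \<open>m\<close>, and the Hessian is diagonal with entries \<open>2 (-1)^m / (m \<pi>)\<^sup>2\<close> and a
  negative number (at \<open>(0, \<plusminus>1)\<close> its determinant is \<open>-4\<close>).

  For \<open>x > 0\<close> the real curve is \<open>y\<^sup>2 = q x\<close> with \<open>q = g\<close> resp. \<open>q = s\<^sup>2\<close>, and \<open>q\<close> vanishes
  exactly at \<open>x = (k \<pi>)\<^sup>2\<close>, where the graphs \<open>y = \<plusminus>sqrt (q x)\<close> cross transversally; for \<open>D\<close>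
  the line \<open>x = 0\<close> crosses \<open>y = \<plusminus>s x\<close> at \<open>(0, \<plusminus>1)\<close>. These are all nodes, since a node
  forces the gradient to vanish. The bounded components are the lenses
  \<open>(k \<pi>)\<^sup>2 < x < ((k + 1) \<pi>)\<^sup>2, y\<^sup>2 < q x\<close>, each containing exactly one odd critical point;
  every other component escapes to infinity along a vertical ray or, for \<open>D\<close> with \<open>x < 0\<close>,
  along the negative \<open>x\<close>-axis.
\<close>

section \<open>The entire function \<open>s\<close>\<close>

lemma s_fun_square: assumes "u \<noteq> 0" shows "s_fun (u\<^sup>2) = sin u / u"
proof -
  have "(csqrt (u\<^sup>2) - u) * (csqrt (u\<^sup>2) + u) = 0"
    using power2_csqrt[of "u\<^sup>2"] by (simp add: algebra_simps power2_eq_square)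
  hence "csqrt (u\<^sup>2) = u \<or> csqrt (u\<^sup>2) = -u" by (auto simp: eq_neg_iff_add_eq_0)
  thus ?thesis using assms by (auto simp: s_fun_def)
qed

lemma s_fun_0 [simp]: "s_fun 0 = 1"
  by (simp add: s_fun_def)

lemma s_fun_of_real_pos:
  assumes "0 < x" shows "s_fun (of_real x) = of_real (sin (sqrt x) / sqrt x)"
  using assms by (simp add: s_fun_def csqrt_of_real sin_of_real)

lemma s_fun_eq_0_iff:
  "s_fun w = 0 \<longleftrightarrow> (\<exists>n::int. n \<noteq> 0 \<and> w = (of_real (of_int n * pi))\<^sup>2)"
proof
  assume h: "s_fun w = 0"
  hence w: "w \<noteq> 0" by (auto simp: s_fun_def)
  hence "sin (csqrt w) = 0" using h by (simp add: s_fun_def)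
  then obtain n::int where n: "csqrt w = of_real (n * pi)" using sin_eq_0 by blast
  hence "n \<noteq> 0" using w by auto
  moreover have "w = (of_real (n * pi))\<^sup>2" using n power2_csqrt[of w] by simp
  ultimately show "\<exists>n::int. n \<noteq> 0 \<and> w = (of_real (of_int n * pi))\<^sup>2" by blast
next
  assume "\<exists>n::int. n \<noteq> 0 \<and> w = (of_real (of_int n * pi))\<^sup>2"
  then obtain n::int where n: "n \<noteq> 0" "w = (of_real (of_int n * pi))\<^sup>2" by blast
  have "sin (of_real (n*pi)) = (0::complex)"
    by (metis sin_of_real sin_npi_int of_real_0 mult.commute)
  thus "s_fun w = 0" using s_fun_square n by simp
qed

text \<open>Away from the branch cut of \<open>csqrt\<close> on the negative axis, write \<open>s\<close> through \<open>csqrt (-z)\<close> instead.\<close>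
lemma s_fun_field_differentiable_nonzero:
  assumes "w \<noteq> 0" shows "s_fun field_differentiable at w"
proof (cases "w \<in> \<real>\<^sub>\<le>\<^sub>0")
  case False
  have "(\<lambda>z. sin (csqrt z) / csqrt z) holomorphic_on (-\<real>\<^sub>\<le>\<^sub>0)"
    by (intro holomorphic_intros) auto
  hence fd: "(\<lambda>z. sin (csqrt z) / csqrt z) field_differentiable at w"
    using False holomorphic_on_imp_differentiable_at[OF _ open_Compl[OF closed_nonpos_Reals_complex]]
    by blast
  show ?thesis
    by (rule field_differentiable_transform_within[where d="norm w", OF _ _ _ fd])
       (use assms in \<open>simp_all add: s_fun_def\<close>, metis dist_0_norm dist_commute less_irrefl)
next
  case True
  have alt: "s_fun z = sin (\<i> * csqrt (-z)) / (\<i> * csqrt (-z))" if "z \<noteq> 0" for z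
    using s_fun_square[of "\<i> * csqrt (-z)"] that by (simp add: power_mult_distrib)
  have "-w \<notin> \<real>\<^sub>\<le>\<^sub>0" using True assms
    by (auto simp: complex_nonpos_Reals_iff complex_eq_iff)
  have "(\<lambda>z. sin (\<i> * csqrt (-z)) / (\<i> * csqrt (-z))) holomorphic_on uminus -` (-\<real>\<^sub>\<le>\<^sub>0)"
    by (intro holomorphic_intros) auto
  moreover have "open ((uminus::complex \<Rightarrow> complex) -` (-\<real>\<^sub>\<le>\<^sub>0))"
    by (rule continuous_open_vimage) (auto intro!: continuous_intros)
  ultimately have fd: "(\<lambda>z. sin (\<i> * csqrt (-z)) / (\<i> * csqrt (-z))) field_differentiable at w"
    using \<open>-w \<notin> \<real>\<^sub>\<le>\<^sub>0\<close> holomorphic_on_imp_differentiable_at by blast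
  show ?thesis
    by (rule field_differentiable_transform_within[where d="norm w", OF _ _ _ fd])
       (use assms in \<open>simp_all\<close>, metis alt dist_0_norm dist_commute less_irrefl)
qed

lemma tendsto_s_fun_0: "(s_fun \<longlongrightarrow> 1) (at 0)"
proof -
  have sinc: "((\<lambda>u::complex. sin u / u) \<longlongrightarrow> 1) (at 0)"
    using DERIV_sin[of 0] unfolding has_field_derivative_iff by simp
  have "filterlim csqrt (at 0) (at (0::complex))"
  proof (rule filterlim_atI)
    have "((\<lambda>z. norm (csqrt z)) \<longlongrightarrow> 0) (at (0::complex))"
      using tendsto_real_sqrt[OF tendsto_norm_zero[OF tendsto_ident_at[of 0 UNIV]]] by simp
    thus "(csqrt \<longlongrightarrow> 0) (at (0::complex))" by (rule tendsto_norm_zero_iff[THEN iffD1])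
    show "\<forall>\<^sub>F x in at 0. csqrt x \<noteq> 0" by (auto simp: eventually_at_filter)
  qed
  from filterlim_compose[OF sinc this]
  have "((\<lambda>z. sin (csqrt z) / csqrt z) \<longlongrightarrow> 1) (at 0)" by (simp add: o_def)
  then show ?thesis
    by (rule tendsto_cong[THEN iffD1, rotated]) (auto simp: eventually_at_filter s_fun_def)
qed

lemma holomorphic_s_fun: "s_fun holomorphic_on UNIV"
proof (rule no_isolated_singularity'[where K="{0}"])
  show "(s_fun \<longlongrightarrow> s_fun z) (at z within UNIV)" if "z \<in> {0}" for z
    using tendsto_s_fun_0 that by (simp add: s_fun_def)
  show "s_fun holomorphic_on UNIV - {0}"
    using s_fun_field_differentiable_nonzero
    by (auto simp: holomorphic_on_def field_differentiable_at_within)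
qed auto

definition g_fun :: "complex \<Rightarrow> complex" where "g_fun z = z * (s_fun z)\<^sup>2"

lemma holomorphic_g_fun: "g_fun holomorphic_on UNIV"
  unfolding g_fun_def[abs_def] by (intro holomorphic_intros holomorphic_s_fun)

text \<open>Since \<open>g_fun z = sin (csqrt z)\<^sup>2\<close>, its derivative is \<open>sin (2 * csqrt z) / (2 * csqrt z)\<close>;
  this is checked on the right half plane and extended by analytic continuation.\<close>
lemma g_fun_has_derivative_right_half_plane:
  assumes "0 < Re z" shows "(g_fun has_field_derivative s_fun (4*z)) (at z)"
proof -
  have z: "z \<notin> \<real>\<^sub>\<le>\<^sub>0" "z \<noteq> 0" using assms by (auto simp: complex_nonpos_Reals_iff)
  let ?c = "csqrt z"
  have c0: "?c \<noteq> 0" using z by simp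
  have g: "g_fun = (\<lambda>u. (sin (csqrt u))\<^sup>2)"
    by (rule ext) (auto simp: g_fun_def s_fun_def power_divide)
  have d: "((\<lambda>u. (sin (csqrt u))\<^sup>2) has_field_derivative
       (2 * sin ?c * (cos ?c * (1 / (2 * ?c))))) (at z)"
    using z by (auto intro!: derivative_eq_intros)
  have "s_fun (4*z) = sin (2*?c) / (2*?c)"
    using s_fun_square[of "2*?c"] c0 by (simp add: power_mult_distrib)
  also have "\<dots> = 2 * sin ?c * (cos ?c * (1 / (2 * ?c)))"
    using c0 by (simp only: sin_double) (simp add: field_simps)
  finally show ?thesis using d g by simp
qed

lemma deriv_g_fun: "deriv g_fun z = s_fun (4*z)"
proof (rule analytic_continuation_open[where s="{z. 0 < Re z}" and s'=UNIV and f="deriv g_fun"])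
  show "open {z. 0 < Re z}" by (intro open_Collect_less continuous_intros)
  show "{z. 0 < Re z} \<noteq> {}" by (auto intro!: exI[of _ 1])
  show "deriv g_fun holomorphic_on UNIV" by (intro holomorphic_deriv holomorphic_g_fun) auto
  show "(\<lambda>z. s_fun (4*z)) holomorphic_on UNIV"
    using holomorphic_on_compose[of "\<lambda>z. 4*z" UNIV s_fun] holomorphic_s_fun
    by (auto simp: o_def intro: holomorphic_on_subset holomorphic_intros)
  show "deriv g_fun z = s_fun (4*z)" if "z \<in> {z. 0 < Re z}" for z
    using g_fun_has_derivative_right_half_plane that DERIV_imp_deriv by auto
qed auto

lemma g_fun_has_derivative: "(g_fun has_field_derivative s_fun (4*z)) (at z)"
  using holomorphic_g_fun deriv_g_fun holomorphic_derivI[of g_fun UNIV z] by auto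

section \<open>Restriction to the real line\<close>

lemma has_real_derivative_real_restriction:
  assumes "F holomorphic_on UNIV" and "\<And>x. Im (F (of_real x)) = 0"
  shows "((\<lambda>t. Re (F (of_real t))) has_real_derivative Re (deriv F (of_real x))) (at x)"
proof -
  have "(F has_field_derivative deriv F (of_real x)) (at (of_real x))"
    using assms(1) holomorphic_derivI[of F UNIV] by auto
  from has_vector_derivative_real_field[OF this]
  show ?thesis by (rule has_field_derivative_Re)
qed

definition s_re :: "real \<Rightarrow> real" where "s_re x = Re (s_fun (of_real x))"

definition s_re' :: "real \<Rightarrow> real" where "s_re' x = Re (deriv s_fun (of_real x))"

definition g_re :: "real \<Rightarrow> real" where "g_re x = x * (s_re x)\<^sup>2"

lemma s_re_pos: "0 < x \<Longrightarrow> s_re x = sin (sqrt x) / sqrt x"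
  by (simp add: s_re_def s_fun_of_real_pos)

lemma s_re_0 [simp]: "s_re 0 = 1"
  by (simp add: s_re_def s_fun_def)

text \<open>For \<open>x < 0\<close> the value is \<open>sinh (sqrt (-x)) / sqrt (-x)\<close>.\<close>
lemma s_fun_of_real: "s_fun (of_real x) = of_real (s_re x)"
proof -
  consider "x < 0" | "x = 0" | "0 < x" by linarith
  hence "Im (s_fun (of_real x)) = 0"
  proof cases
    case 1
    define r where "r = sqrt (-x)"
    have r: "csqrt (- of_real x) = of_real r" "r \<noteq> 0"
      unfolding r_def using 1 csqrt_of_real[of "-x"] by simp_all
    have "(\<i> * of_real r)\<^sup>2 = of_real x"
      using 1 by (simp add: r_def power_mult_distrib flip: of_real_power)
    hence "s_fun (of_real x) = sin (\<i> * of_real r) / (\<i> * of_real r)"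
      using s_fun_square[of "\<i> * of_real r"] r by simp
    also have "\<dots> = of_real ((exp r - inverse (exp r)) / 2 / r)"
      by (simp add: sin_i_times exp_of_real)
    finally show ?thesis by simp
  qed (simp_all add: s_fun_def sin_of_real)
  thus ?thesis by (simp add: s_re_def complex_eq_iff)
qed

lemma g_fun_of_real: "g_fun (of_real x) = of_real (g_re x)"
  by (simp add: g_fun_def g_re_def s_fun_of_real)

lemma s_re_has_derivative: "(s_re has_real_derivative s_re' x) (at x)"
proof -
  have "Im (s_fun (of_real t)) = 0" for t by (simp add: s_fun_of_real)
  from has_real_derivative_real_restriction[OF holomorphic_s_fun this]
  show ?thesis unfolding s_re'_def s_re_def[abs_def] .
qed

lemma g_re_has_derivative: "(g_re has_real_derivative s_re (4*x)) (at x)"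
proof -
  have "g_re = (\<lambda>t. Re (g_fun (of_real t)))" by (simp add: g_fun_of_real fun_eq_iff)
  moreover have "Re (deriv g_fun (of_real x)) = s_re (4*x)"
    by (simp add: deriv_g_fun s_re_def)
  ultimately show ?thesis
    using has_real_derivative_real_restriction[OF holomorphic_g_fun, of x] by (simp add: g_fun_of_real)
qed

lemma continuous_on_s_re': "continuous_on UNIV s_re'"
proof -
  have "continuous_on UNIV (deriv s_fun)"
    using holomorphic_on_imp_continuous_on[OF holomorphic_deriv[OF holomorphic_s_fun]] by simp
  hence "continuous_on UNIV (\<lambda>x. Re (deriv s_fun (of_real x)))"
    by (intro continuous_intros) (auto intro: continuous_on_compose2[of UNIV "deriv s_fun"])
  thus ?thesis unfolding s_re'_def[abs_def] .
qed

lemma continuous_on_s_re: "continuous_on UNIV s_re"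
  using s_re_has_derivative by (meson DERIV_isCont continuous_at_imp_continuous_on)

lemma continuous_on_g_re: "continuous_on UNIV g_re"
  unfolding g_re_def[abs_def] by (intro continuous_intros continuous_on_s_re)

lemma s_re_square_pi: "n \<noteq> 0 \<Longrightarrow> s_re ((real n * pi)\<^sup>2) = 0"
  by (simp add: s_re_pos)

lemma s_re'_square_pi:
  assumes "n \<noteq> 0" shows "s_re' ((real n * pi)\<^sup>2) = (-1)^n / (2 * (real n * pi)\<^sup>2)"
proof -
  define c where "c = real n * pi"
  have c: "c > 0" using assms by (simp add: c_def)
  define w :: complex where "w = of_real (c\<^sup>2)"
  have w: "csqrt w = of_real c" "w \<notin> \<real>\<^sub>\<le>\<^sub>0" "w \<noteq> 0"
    using c by (simp_all add: w_def csqrt_of_real complex_nonpos_Reals_iff)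
  have "((\<lambda>z. sin (csqrt z) / csqrt z) has_field_derivative
     (cos (csqrt w) * (1 / (2 * csqrt w)) * csqrt w - sin (csqrt w) * (1 / (2 * csqrt w)))
       / (csqrt w * csqrt w)) (at w)"
    using w by (auto intro!: derivative_eq_intros)
  hence "(s_fun has_field_derivative
     (cos (csqrt w) * (1 / (2 * csqrt w)) * csqrt w - sin (csqrt w) * (1 / (2 * csqrt w)))
       / (csqrt w * csqrt w)) (at w)"
    by (rule has_field_derivative_transform_within_open[where S="-{0}"])
       (use w in \<open>auto simp: s_fun_def\<close>)
  hence "deriv s_fun w = of_real ((cos c * (1 / (2*c)) * c - sin c * (1/(2*c))) / (c*c))"
    using w by (simp add: DERIV_imp_deriv cos_of_real sin_of_real)
  also have "\<dots> = of_real ((-1)^n / (2 * c\<^sup>2))"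
    using c by (simp add: c_def field_simps power2_eq_square)
  finally show ?thesis by (simp add: s_re'_def w_def c_def)
qed

lemma sin_half_pi_multiple_squared: "(sin (real m * pi / 2))\<^sup>2 = (if even m then 0 else 1)"
proof (cases "even m")
  case False
  then obtain k where k: "m = 2*k+1" using oddE by blast
  have "sin (real m * pi / 2) = sin (real k * pi + pi/2)" by (simp add: k field_simps)
  also have "\<dots> = cos (real k * pi)" by (simp add: sin_add)
  also have "\<dots> = (-1)^k" by simp
  finally show ?thesis using False by (simp add: power_mult_distrib flip: power_mult)
qed (auto elim: evenE)

lemma g_re_half_pi_multiple:
  assumes "m \<ge> 1" shows "g_re ((real m * pi / 2)\<^sup>2) = (if even m then 0 else 1)"
proof -
  have "g_re (c\<^sup>2) = (sin c)\<^sup>2" if "c > 0" for c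
    using that by (simp add: g_re_def s_re_pos power_divide)
  moreover have "real m * pi / 2 > 0" using assms by simp
  ultimately show ?thesis by (simp add: sin_half_pi_multiple_squared)
qed

lemma s_fun_4_eq_0_iff:
  "s_fun (4*z) = 0 \<longleftrightarrow> (\<exists>m::nat. m \<ge> 1 \<and> z = of_real ((real m * pi / 2)\<^sup>2))"
proof
  assume "s_fun (4*z) = 0"
  then obtain n::int where n: "n \<noteq> 0" "4*z = (of_real (of_int n * pi))\<^sup>2"
    using s_fun_eq_0_iff by blast
  have "(of_int n * pi)\<^sup>2 = (real (nat \<bar>n\<bar>) * pi)\<^sup>2"
    by (simp add: power_mult_distrib)
  hence "4*z = of_real ((real (nat \<bar>n\<bar>) * pi)\<^sup>2)" using n(2) by (metis of_real_power)
  hence "z = of_real ((real (nat \<bar>n\<bar>) * pi / 2)\<^sup>2)" by (simp add: power_divide field_simps)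
  moreover have "nat \<bar>n\<bar> \<ge> 1" using n by simp
  ultimately show "\<exists>m::nat. m \<ge> 1 \<and> z = of_real ((real m * pi / 2)\<^sup>2)" by blast
next
  assume "\<exists>m::nat. m \<ge> 1 \<and> z = of_real ((real m * pi / 2)\<^sup>2)"
  then obtain m::nat where m: "m \<ge> 1" "z = of_real ((real m * pi / 2)\<^sup>2)" by blast
  have "4*z = (of_real (of_int (int m) * pi))\<^sup>2"
    using m by (simp add: power_divide power_mult_distrib) (metis mult.commute)
  moreover have "int m \<noteq> 0" using m by simp
  ultimately show "s_fun (4*z) = 0" using s_fun_eq_0_iff by blast
qed

section \<open>Critical points\<close>

lemma f_W_A: "f_W A_half_inf p = g_fun (fst p) - (snd p)\<^sup>2"
  by (simp add: f_W_def g_fun_def)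

lemma f_W_D: "f_W D_half_inf p = g_fun (fst p) - fst p * (snd p)\<^sup>2"
  by (simp add: f_W_def g_fun_def)

lemma f_W_realpt: "f_W W (realpt q) = of_real (fR_W W q)"
  by (cases W) (simp_all add: fR_W_def f_W_A f_W_D realpt_def g_fun_of_real)

lemma fR_W_A: "fR_W A_half_inf (x, y) = g_re x - y\<^sup>2"
  by (simp add: fR_W_def f_W_A realpt_def g_fun_of_real)

lemma fR_W_D: "fR_W D_half_inf (x, y) = g_re x - x * y\<^sup>2"
  by (simp add: fR_W_def f_W_D realpt_def g_fun_of_real)

lemma XR_W_eq: "XR_W W = {q. fR_W W q = 0}"
  by (simp add: XR_W_def f_W_realpt)

lemma XR_W_D_iff: "(x, y) \<in> XR_W D_half_inf \<longleftrightarrow> x * ((s_re x)\<^sup>2 - y\<^sup>2) = 0"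
  by (simp add: XR_W_eq fR_W_D g_re_def algebra_simps)

lemma has_derivative_A_shape:
  fixes g :: "'a::real_normed_field \<Rightarrow> 'a"
  assumes "(g has_field_derivative g') (at (fst p))"
  shows "((\<lambda>q. g (fst q) - (snd q)\<^sup>2) has_derivative (\<lambda>h. g' * fst h + (- 2 * snd p) * snd h)) (at p)"
proof -
  have "((\<lambda>q. g (fst q)) has_derivative (\<lambda>h. g' * fst h)) (at p)"
    using has_derivative_compose[OF has_derivative_fst[OF has_derivative_ident]] assms
    by (simp add: has_field_derivative_def)
  hence "((\<lambda>q. g (fst q) - snd q * snd q) has_derivative
      (\<lambda>h. g' * fst h - (snd p * snd h + snd h * snd p))) (at p)"
    by (intro has_derivative_diff has_derivative_mult has_derivative_snd has_derivative_ident)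
  hence "((\<lambda>q. g (fst q) - snd q * snd q) has_derivative (\<lambda>h. g' * fst h + (- 2 * snd p) * snd h)) (at p)"
    by (rule has_derivative_eq_rhs) (simp add: fun_eq_iff algebra_simps)
  thus ?thesis by (simp add: power2_eq_square)
qed

lemma has_derivative_D_shape:
  fixes g :: "'a::real_normed_field \<Rightarrow> 'a"
  assumes "(g has_field_derivative g') (at (fst p))"
  shows "((\<lambda>q. g (fst q) - fst q * (snd q)\<^sup>2) has_derivative
           (\<lambda>h. (g' - (snd p)\<^sup>2) * fst h + (- 2 * fst p * snd p) * snd h)) (at p)"
proof -
  have "((\<lambda>q. g (fst q)) has_derivative (\<lambda>h. g' * fst h)) (at p)"
    using has_derivative_compose[OF has_derivative_fst[OF has_derivative_ident]] assms
    by (simp add: has_field_derivative_def)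
  hence "((\<lambda>q. g (fst q) - fst q * (snd q * snd q)) has_derivative
      (\<lambda>h. g' * fst h - (fst p * (snd p * snd h + snd h * snd p) + fst h * (snd p * snd p)))) (at p)"
    by (intro has_derivative_diff has_derivative_mult has_derivative_snd has_derivative_fst
        has_derivative_ident)
  hence "((\<lambda>q. g (fst q) - fst q * (snd q * snd q)) has_derivative
      (\<lambda>h. (g' - (snd p)\<^sup>2) * fst h + (- 2 * fst p * snd p) * snd h)) (at p)"
    by (rule has_derivative_eq_rhs) (simp add: fun_eq_iff algebra_simps power2_eq_square)
  thus ?thesis by (simp add: power2_eq_square)
qed

lemma linear_form_pair_eq_0_iff:
  fixes a b :: "'a::comm_ring_1"
  shows "(\<lambda>h. a * fst h + b * snd h) = (\<lambda>_. 0) \<longleftrightarrow> a = 0 \<and> b = 0"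
proof
  assume h: "(\<lambda>h. a * fst h + b * snd h) = (\<lambda>_. 0)"
  from fun_cong[OF h, of "(1,0)"] fun_cong[OF h, of "(0,1)"] show "a = 0 \<and> b = 0" by simp
qed simp

lemma has_derivative_zero_iff:
  assumes "(f has_derivative f') (at p)"
  shows "(f has_derivative (\<lambda>_. 0)) (at p) \<longleftrightarrow> f' = (\<lambda>_. 0)"
  using has_derivative_unique[OF assms, of "\<lambda>_. 0"] assms by blast

lemma crit_W_A_iff: "p \<in> crit_W A_half_inf \<longleftrightarrow> s_fun (4 * fst p) = 0 \<and> snd p = 0"
proof -
  have "(f_W A_half_inf has_derivative (\<lambda>h. s_fun (4 * fst p) * fst h + (- 2 * snd p) * snd h)) (at p)"
    using has_derivative_A_shape[OF g_fun_has_derivative] by (simp add: f_W_A[abs_def])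
  hence "p \<in> crit_W A_half_inf \<longleftrightarrow> s_fun (4 * fst p) = 0 \<and> - 2 * snd p = 0"
    unfolding crit_W_def mem_Collect_eq linear_form_pair_eq_0_iff[symmetric]
    by (rule has_derivative_zero_iff)
  thus ?thesis by simp
qed

lemma crit_W_D_iff:
  "p \<in> crit_W D_half_inf \<longleftrightarrow> s_fun (4 * fst p) = (snd p)\<^sup>2 \<and> fst p * snd p = 0"
proof -
  have "(f_W D_half_inf has_derivative
      (\<lambda>h. (s_fun (4 * fst p) - (snd p)\<^sup>2) * fst h + (- 2 * fst p * snd p) * snd h)) (at p)"
    using has_derivative_D_shape[OF g_fun_has_derivative] by (simp add: f_W_D[abs_def])
  hence "p \<in> crit_W D_half_inf \<longleftrightarrow>
      s_fun (4 * fst p) - (snd p)\<^sup>2 = 0 \<and> - 2 * fst p * snd p = 0"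
    unfolding crit_W_def mem_Collect_eq linear_form_pair_eq_0_iff[symmetric]
    by (rule has_derivative_zero_iff)
  thus ?thesis by simp
qed

definition axis_point :: "nat \<Rightarrow> real \<times> real" where
  "axis_point m = ((real m * pi / 2)\<^sup>2, 0)"

definition crit_real :: "W_type \<Rightarrow> (real \<times> real) set" where
  "crit_real W = axis_point ` {1..} \<union> (if W = D_half_inf then {(0,1), (0,-1)} else {})"

lemma Re_realpt [simp]: "(Re (fst (realpt q)), Re (snd (realpt q))) = q"
  by (cases q) (simp add: realpt_def)

lemma realpt_eq_iff: "realpt p = realpt q \<longleftrightarrow> p = q"
  by (metis Re_realpt)

lemma crit_W_eq: "crit_W W = realpt ` crit_real W"
proof -
  define Z :: "(complex \<times> complex) set" where "Z = {p. s_fun (4 * fst p) = 0 \<and> snd p = 0}"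
  have axis: "realpt ` axis_point ` {1..} = Z"
    by (auto simp: Z_def s_fun_4_eq_0_iff realpt_def axis_point_def image_iff)
  have "crit_W A_half_inf = Z" using crit_W_A_iff by (auto simp: Z_def)
  moreover have "crit_W D_half_inf = Z \<union> {(0,1), (0,-1)}"
  proof -
    have "s_fun (4 * a) = b\<^sup>2 \<and> a * b = 0 \<longleftrightarrow>
          (s_fun (4 * a) = 0 \<and> b = 0) \<or> (a = 0 \<and> (b = 1 \<or> b = -1))" for a b
      by (cases "a = 0") (auto simp: power2_eq_1_iff)
    thus ?thesis using crit_W_D_iff by (auto simp: Z_def)
  qed
  ultimately show ?thesis
    using axis by (cases W) (simp_all add: crit_real_def image_Un realpt_def)
qed

lemma fR_W_axis_point: "m \<ge> 1 \<Longrightarrow> fR_W W (axis_point m) = (if even m then 0 else 1)"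
  by (cases W) (simp_all add: axis_point_def fR_W_A fR_W_D g_re_half_pi_multiple)

lemma fR_W_D_vertical: "fR_W D_half_inf (0, y) = 0"
  by (simp add: fR_W_D g_re_def)

section \<open>Hessians\<close>

lemma pd_1_eqI: "((\<lambda>t. g (t, snd q)) has_real_derivative D) (at (fst q)) \<Longrightarrow> pd 1 g q = D"
  by (simp add: pd_def DERIV_imp_deriv)

lemma pd_2_eqI: "((\<lambda>t. g (fst q, t)) has_real_derivative D) (at (snd q)) \<Longrightarrow> pd 2 g q = D"
  by (simp add: pd_def DERIV_imp_deriv)

lemma hessian_nth:
  "hessian g q $ 1 $ 1 = pd 1 (pd 1 g) q" "hessian g q $ 1 $ 2 = pd 1 (pd 2 g) q"
  "hessian g q $ 2 $ 1 = pd 2 (pd 1 g) q" "hessian g q $ 2 $ 2 = pd 2 (pd 2 g) q"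
  by (simp_all add: hessian_def)

lemma s_re_4_has_derivative: "((\<lambda>t. s_re (4*t)) has_real_derivative 4 * s_re' (4*x)) (at x)"
  using DERIV_chain2[OF s_re_has_derivative DERIV_cmult[OF DERIV_ident, of 4]] by (simp add: mult.commute)

lemma pd_fR_W_A:
  "pd 1 (fR_W A_half_inf) = (\<lambda>q. s_re (4 * fst q))" "pd 2 (fR_W A_half_inf) = (\<lambda>q. - 2 * snd q)"
  by (rule ext, rule pd_1_eqI pd_2_eqI, simp add: fR_W_A, auto intro!: derivative_eq_intros g_re_has_derivative)+

lemma pd_fR_W_D:
  "pd 1 (fR_W D_half_inf) = (\<lambda>q. s_re (4 * fst q) - (snd q)\<^sup>2)"
  "pd 2 (fR_W D_half_inf) = (\<lambda>q. - 2 * fst q * snd q)"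
  by (rule ext, rule pd_1_eqI pd_2_eqI, simp add: fR_W_D, auto intro!: derivative_eq_intros g_re_has_derivative)+

lemma hessian_fR_W_A:
  "hessian (fR_W A_half_inf) (x,y) $ 1 $ 1 = 4 * s_re' (4*x)"
  "hessian (fR_W A_half_inf) (x,y) $ 1 $ 2 = 0" "hessian (fR_W A_half_inf) (x,y) $ 2 $ 1 = 0"
  "hessian (fR_W A_half_inf) (x,y) $ 2 $ 2 = -2"
  unfolding hessian_nth pd_fR_W_A
  by (rule pd_1_eqI pd_2_eqI; auto intro!: derivative_eq_intros s_re_4_has_derivative)+

lemma hessian_fR_W_D:
  "hessian (fR_W D_half_inf) (x,y) $ 1 $ 1 = 4 * s_re' (4*x)"
  "hessian (fR_W D_half_inf) (x,y) $ 1 $ 2 = -2 * y" "hessian (fR_W D_half_inf) (x,y) $ 2 $ 1 = -2 * y"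
  "hessian (fR_W D_half_inf) (x,y) $ 2 $ 2 = -2 * x"
  unfolding hessian_nth pd_fR_W_D
  by (rule pd_1_eqI pd_2_eqI; auto intro!: derivative_eq_intros s_re_4_has_derivative)+

lemma quadratic_form_2:
  fixes H :: "real^2^2"
  shows "v \<bullet> (H *v v) = H$1$1 * (v$1)\<^sup>2 + (H$1$2 + H$2$1) * v$1 * v$2 + H$2$2 * (v$2)\<^sup>2"
  by (simp add: inner_vec_def matrix_vector_mult_def sum_2 algebra_simps power2_eq_square)

text \<open>With \<open>a = H$1$1\<close>: the form takes the value \<open>a\<close> at \<open>(1,0)\<close> and \<open>a * det H\<close> at \<open>(-H$1$2, a)\<close>;
  if \<open>a = 0\<close> it is \<open>2 b x y + d y\<^sup>2\<close> with \<open>b \<noteq> 0\<close>, which takes both signs.\<close>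
lemma indefinite_if_det_neg:
  fixes H :: "real^2^2"
  assumes "H$1$2 = H$2$1" "det H < 0" shows "indefinite H"
proof -
  define a where "a = H$1$1"
  define b where "b = H$1$2"
  define d where "d = H$2$2"
  have det: "a * d - b * b < 0" using assms by (simp add: det_2 a_def b_def d_def)
  have q: "v \<bullet> (H *v v) = a * (v$1)\<^sup>2 + 2 * b * v$1 * v$2 + d * (v$2)\<^sup>2" for v
    using assms(1) by (simp add: quadratic_form_2 a_def b_def d_def)
  show ?thesis
  proof (cases "a = 0")
    case True
    hence b: "b \<noteq> 0" using det by auto
    have "(vector [(1-d)/(2*b), 1] :: real^2) \<bullet> (H *v vector [(1-d)/(2*b), 1]) = 1"
      "(vector [(-1-d)/(2*b), 1] :: real^2) \<bullet> (H *v vector [(-1-d)/(2*b), 1]) = -1"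
      using True b by (simp_all add: q field_simps)
    thus ?thesis unfolding indefinite_def by (metis zero_less_one neg_less_0_iff_less)
  next
    case False
    have "(vector [1, 0] :: real^2) \<bullet> (H *v vector [1,0]) = a"
      "(vector [-b, a] :: real^2) \<bullet> (H *v vector [-b,a]) = a * (a * d - b * b)"
      by (simp_all add: q power2_eq_square algebra_simps)
    thus ?thesis unfolding indefinite_def using det False
      by (metis linorder_neqE_linordered_idom mult_neg_neg mult_pos_neg)
  qed
qed

lemma neg_definite_if_diagonal:
  fixes H :: "real^2^2"
  assumes "H$1$2 = 0" "H$2$1 = 0" "H$1$1 < 0" "H$2$2 < 0" shows "neg_definite H"
  unfolding neg_definite_def
proof (intro allI impI)
  fix v :: "real^2" assume "v \<noteq> 0"
  hence "v$1 \<noteq> 0 \<or> v$2 \<noteq> 0" by (auto simp: vec_eq_iff forall_2)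
  hence "H$1$1 * (v$1)\<^sup>2 + H$2$2 * (v$2)\<^sup>2 < 0"
    using assms(3,4)
    by (smt (verit) mult_neg_pos mult_nonpos_nonneg zero_le_power2 zero_less_power2)
  thus "v \<bullet> (H *v v) < 0" using assms by (simp add: quadratic_form_2)
qed

lemma hessian_axis_point:
  fixes W :: W_type
  assumes "m \<ge> 1"
  defines "H \<equiv> hessian (fR_W W) (axis_point m)"
  shows "nondegenerate H" and "even m \<Longrightarrow> indefinite H" and "odd m \<Longrightarrow> neg_definite H"
proof -
  define x0 where "x0 = (real m * pi / 2)\<^sup>2"
  have x0: "x0 > 0" using assms by (simp add: x0_def)
  define h where "h = 4 * s_re' (4 * x0)"
  have "4 * x0 = (real m * pi)\<^sup>2" by (simp add: x0_def power_divide)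
  hence h: "h = 2 * (-1)^m / (real m * pi)\<^sup>2"
    using assms s_re'_square_pi[of m] by (simp add: h_def)
  have H: "H$1$1 = h" "H$1$2 = 0" "H$2$1 = 0" "H$2$2 < 0"
    using x0 by (cases W; simp add: H_def axis_point_def x0_def[symmetric]
        hessian_fR_W_A hessian_fR_W_D h_def)+
  have "h \<noteq> 0" using h assms by simp
  thus "nondegenerate H" using H by (simp add: nondegenerate_def det_2)
  show "indefinite H" if "even m"
  proof -
    have "h > 0" using h assms that by simp
    thus ?thesis using H by (intro indefinite_if_det_neg) (simp_all add: det_2 mult_pos_neg)
  qed
  show "neg_definite H" if "odd m"
  proof -
    have "h < 0" using h assms that by simp
    thus ?thesis using H by (intro neg_definite_if_diagonal) simp_all
  qed
qed

lemma hessian_D_vertical: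
  assumes "\<sigma>\<^sup>2 = 1"
  shows "indefinite (hessian (fR_W D_half_inf) (0, \<sigma>))"
    and "nondegenerate (hessian (fR_W D_half_inf) (0, \<sigma>))"
proof -
  have "det (hessian (fR_W D_half_inf) (0, \<sigma>)) = -4"
    using assms by (simp add: det_2 hessian_fR_W_D power2_eq_square)
  thus "indefinite (hessian (fR_W D_half_inf) (0, \<sigma>))"
    "nondegenerate (hessian (fR_W D_half_inf) (0, \<sigma>))"
    by (simp_all add: indefinite_if_det_neg hessian_fR_W_D nondegenerate_def)
qed

section \<open>Nodes\<close>

lemma is_nodeI:
  assumes "p \<in> X" "open U" "p \<in> U" "branch \<gamma>1 e p" "branch \<gamma>2 e p"
    "X \<inter> U = \<gamma>1 ` {-e<..<e} \<union> \<gamma>2 ` {-e<..<e}"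
    "vector_derivative \<gamma>1 (at 0) = v" "vector_derivative \<gamma>2 (at 0) = w"
    "fst v * snd w - snd v * fst w \<noteq> 0"
  shows "is_node X p"
  using assms unfolding is_node_def Let_def by blast

lemma is_nodeE:
  assumes "is_node X p"
  obtains U e \<gamma>1 \<gamma>2 where "branch \<gamma>1 e p" "branch \<gamma>2 e p"
    "\<gamma>1 ` {-e<..<e} \<subseteq> X" "\<gamma>2 ` {-e<..<e} \<subseteq> X"
    "fst (vector_derivative \<gamma>1 (at 0)) * snd (vector_derivative \<gamma>2 (at 0)) -
     snd (vector_derivative \<gamma>1 (at 0)) * fst (vector_derivative \<gamma>2 (at 0)) \<noteq> 0"
  using assms unfolding is_node_def Let_def by blast

lemma branch_graph:
  fixes \<phi> \<phi>' :: "real \<Rightarrow> real"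
  assumes e: "e > 0" and c: "c > 0"
    and d: "\<And>x. x \<in> {a - c*e <..< a + c*e} \<Longrightarrow> (\<phi> has_real_derivative \<phi>' x) (at x)"
    and cont: "continuous_on {a - c*e <..< a + c*e} \<phi>'"
  shows "branch (\<lambda>t. (a + c*t, \<phi> (a + c*t))) e (a, \<phi> a)"
    and "vector_derivative (\<lambda>t. (a + c*t, \<phi> (a + c*t))) (at 0) = (c, c * \<phi>' a)"
proof -
  let ?g = "\<lambda>t. (a + c*t, \<phi> (a + c*t))"
  have mem: "a + c*t \<in> {a - c*e <..< a + c*e}" if "t \<in> {-e<..<e}" for t
    using that c mult_strict_left_mono[of "-e" t c] mult_strict_left_mono[of t e c] by auto
  have vd: "(?g has_vector_derivative (c, c * \<phi>' (a + c*t))) (at t)" if "t \<in> {-e<..<e}" for t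
  proof -
    have l: "((\<lambda>t. a + c*t) has_real_derivative c) (at t)" by (auto intro!: derivative_eq_intros)
    have "((\<lambda>t. \<phi> (a + c*t)) has_real_derivative \<phi>' (a + c*t) * c) (at t)"
      by (rule DERIV_chain2[OF d[OF mem[OF that]] l])
    hence p2: "((\<lambda>t. \<phi> (a + c*t)) has_vector_derivative c * \<phi>' (a + c*t)) (at t)"
      by (simp add: has_real_derivative_iff_has_vector_derivative mult.commute)
    have p1: "((\<lambda>t. a + c*t) has_vector_derivative c) (at t)"
      using l by (simp add: has_real_derivative_iff_has_vector_derivative)
    show ?thesis by (rule has_vector_derivative_Pair[OF p1 p2])
  qed
  have cD: "continuous_on {-e<..<e} (\<lambda>t. (c, c * \<phi>' (a + c*t)))"
  proof -
    have "continuous_on {-e<..<e} (\<lambda>t. \<phi>' (a + c*t))"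
      by (rule continuous_on_compose2[OF cont]) (use mem in \<open>auto intro!: continuous_intros\<close>)
    thus ?thesis by (intro continuous_intros)
  qed
  have "?g C1_differentiable_on {-e<..<e}"
    unfolding C1_differentiable_on_def
    by (intro exI[of _ "\<lambda>t. (c, c * \<phi>' (a + c*t))"] conjI ballI vd cD)
  moreover have "inj_on ?g {-e<..<e}" using c by (auto simp: inj_on_def)
  moreover have "\<forall>t\<in>{-e<..<e}. vector_derivative ?g (at t) \<noteq> 0"
    using vector_derivative_at[OF vd] c by (auto simp: zero_prod_def)
  ultimately show "branch ?g e (a, \<phi> a)" using e by (simp add: branch_def)
  show "vector_derivative ?g (at 0) = (c, c * \<phi>' a)"
    using vector_derivative_at[OF vd[of 0]] e by simp
qed

lemma branch_vertical_line:
  assumes e: "e > 0"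
  shows "branch (\<lambda>t. (x0, y0 + t)) e (x0, y0)"
    and "vector_derivative (\<lambda>t. (x0, y0 + t)) (at 0) = (0, 1)"
proof -
  let ?g = "\<lambda>t::real. (x0, y0 + t)"
  have vd: "(?g has_vector_derivative (0, 1)) (at t)" for t
    by (auto intro!: derivative_eq_intros)
  have "?g C1_differentiable_on {-e<..<e}"
    unfolding C1_differentiable_on_def
    by (intro exI[of _ "\<lambda>_. (0,1)"] conjI ballI vd continuous_on_const)
  moreover have "inj_on ?g {-e<..<e}" by (auto simp: inj_on_def)
  moreover have "\<forall>t\<in>{-e<..<e}. vector_derivative ?g (at t) \<noteq> 0"
    using vector_derivative_at[OF vd] by (auto simp: zero_prod_def)
  ultimately show "branch ?g e (x0, y0)" using e by (simp add: branch_def)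
  show "vector_derivative ?g (at 0) = (0, 1)"
    using vector_derivative_at[OF vd[of 0]] by simp
qed

lemma branch_tangent_in_kernel:
  assumes br: "branch \<gamma> e p" and img: "\<gamma> ` {-e<..<e} \<subseteq> {q. F q = 0}"
    and F: "(F has_derivative (\<lambda>h. a * fst h + b * snd h)) (at p)"
  shows "a * fst (vector_derivative \<gamma> (at 0)) + b * snd (vector_derivative \<gamma> (at 0)) = 0"
proof -
  let ?v = "vector_derivative \<gamma> (at 0)"
  from br have e: "e > 0" and c1: "\<gamma> C1_differentiable_on {-e<..<e}" and g0: "\<gamma> 0 = p"
    by (auto simp: branch_def)
  from c1 obtain D where D: "\<And>x. x\<in>{-e<..<e} \<Longrightarrow> (\<gamma> has_vector_derivative D x) (at x)"
    unfolding C1_differentiable_on_def by blast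
  have "0 \<in> {-e<..<e}" using e by simp
  hence gv: "(\<gamma> has_vector_derivative ?v) (at 0)"
    using D vector_derivative_at by metis
  hence gd: "(\<gamma> has_derivative (\<lambda>t. t *\<^sub>R ?v)) (at 0)" by (simp add: has_vector_derivative_def)
  have F0: "(F has_derivative (\<lambda>h. a * fst h + b * snd h)) (at (\<gamma> 0))" using F g0 by simp
  have "((\<lambda>t. F (\<gamma> t)) has_derivative (\<lambda>x. (\<lambda>h. a * fst h + b * snd h) ((\<lambda>t. t *\<^sub>R ?v) x))) (at 0)"
    by (rule has_derivative_compose[OF gd F0])
  hence "((\<lambda>t. F (\<gamma> t)) has_derivative (\<lambda>x. (a * fst ?v + b * snd ?v) * x)) (at 0)"
    by (rule has_derivative_eq_rhs) (simp add: fun_eq_iff algebra_simps)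
  hence h1: "((\<lambda>t. F (\<gamma> t)) has_real_derivative (a * fst ?v + b * snd ?v)) (at 0)"
    by (simp add: has_field_derivative_def)
  have eq0: "(\<lambda>t::real. 0::real) x = F (\<gamma> x)" if "x \<in> {-e<..<e}" for x
  proof -
    have "\<gamma> x \<in> \<gamma> ` {-e<..<e}" using that by (rule imageI)
    with img have "\<gamma> x \<in> {q. F q = 0}" by (rule subsetD)
    thus ?thesis by simp
  qed
  have h2: "((\<lambda>t. F (\<gamma> t)) has_real_derivative 0) (at 0)"
    by (rule has_field_derivative_transform_within_open[OF DERIV_const open_greaterThanLessThan \<open>0 \<in> {-e<..<e}\<close> eq0])
  show ?thesis using DERIV_unique[OF h1 h2] .
qed

text \<open>Two transversal tangent vectors lie in the kernel of the differential, so it vanishes: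
  a curve has no node at a regular point.\<close>
lemma node_imp_derivative_zero:
  assumes node: "is_node {q. F q = 0} p"
    and F: "(F has_derivative (\<lambda>h. a * fst h + b * snd h)) (at p)"
  shows "a = 0 \<and> b = 0"
proof -
  obtain e \<gamma>1 \<gamma>2 where b1: "branch \<gamma>1 e p" and b2: "branch \<gamma>2 e p"
    and s1: "\<gamma>1 ` {-e<..<e} \<subseteq> {q. F q = 0}" and s2: "\<gamma>2 ` {-e<..<e} \<subseteq> {q. F q = 0}"
    and tr: "fst (vector_derivative \<gamma>1 (at 0)) * snd (vector_derivative \<gamma>2 (at 0)) -
         snd (vector_derivative \<gamma>1 (at 0)) * fst (vector_derivative \<gamma>2 (at 0)) \<noteq> 0"
    using node by (rule is_nodeE)
  define v1 where "v1 = fst (vector_derivative \<gamma>1 (at 0))"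
  define v2 where "v2 = snd (vector_derivative \<gamma>1 (at 0))"
  define w1 where "w1 = fst (vector_derivative \<gamma>2 (at 0))"
  define w2 where "w2 = snd (vector_derivative \<gamma>2 (at 0))"
  have e1: "a * v1 + b * v2 = 0"
    using branch_tangent_in_kernel[OF b1 s1 F] by (simp add: v1_def v2_def)
  have e2: "a * w1 + b * w2 = 0"
    using branch_tangent_in_kernel[OF b2 s2 F] by (simp add: w1_def w2_def)
  have d: "v1 * w2 - v2 * w1 \<noteq> 0" using tr by (simp add: v1_def v2_def w1_def w2_def)
  have "a * (v1 * w2 - v2 * w1) = (a * v1 + b * v2) * w2 - (a * w1 + b * w2) * v2"
    "b * (v1 * w2 - v2 * w1) = (a * w1 + b * w2) * v1 - (a * v1 + b * v2) * w1"
    by (simp_all add: algebra_simps)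
  hence "a * (v1 * w2 - v2 * w1) = 0" "b * (v1 * w2 - v2 * w1) = 0" using e1 e2 by simp_all
  thus ?thesis using d by simp
qed

lemma near_opposite_graphs:
  fixes \<phi> :: "real \<Rightarrow> real"
  assumes X: "\<And>x y. x > 0 \<Longrightarrow> (x,y) \<in> X \<longleftrightarrow> y\<^sup>2 = (\<phi> x)\<^sup>2" and e: "e \<le> x0"
  shows "X \<inter> ({x0 - e<..<x0 + e} \<times> UNIV) =
    (\<lambda>t. (x0 + t, \<phi> (x0 + t))) ` {-e<..<e} \<union> (\<lambda>t. (x0 + t, - \<phi> (x0 + t))) ` {-e<..<e}"
proof (intro equalityI subsetI)
  fix q assume q: "q \<in> X \<inter> ({x0 - e<..<x0 + e} \<times> UNIV)"
  obtain x y where xy: "q = (x,y)" by (cases q)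
  have xi: "x - x0 \<in> {-e<..<e}" using q xy by auto
  hence "y = \<phi> x \<or> y = - \<phi> x" using q xy X[of x y] e by (auto simp: power2_eq_iff)
  thus "q \<in> (\<lambda>t. (x0 + t, \<phi> (x0 + t))) ` {-e<..<e} \<union> (\<lambda>t. (x0 + t, - \<phi> (x0 + t))) ` {-e<..<e}"
    using xi unfolding xy by (auto intro!: image_eqI[where x="x - x0"])
next
  fix q assume "q \<in> (\<lambda>t. (x0 + t, \<phi> (x0 + t))) ` {-e<..<e} \<union> (\<lambda>t. (x0 + t, - \<phi> (x0 + t))) ` {-e<..<e}"
  then obtain t where t: "t \<in> {-e<..<e}"
    and q: "q = (x0 + t, \<phi> (x0 + t)) \<or> q = (x0 + t, - \<phi> (x0 + t))" by auto
  have "x0 + t > 0" using t e by auto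
  thus "q \<in> X \<inter> ({x0 - e<..<x0 + e} \<times> UNIV)" using q t X by auto
qed

lemma node_of_opposite_graphs:
  fixes \<phi> \<phi>' :: "real \<Rightarrow> real"
  assumes x0: "x0 > 0" and phi0: "\<phi> x0 = 0" and nz: "\<phi>' x0 \<noteq> 0"
    and d: "\<And>x. x > 0 \<Longrightarrow> (\<phi> has_real_derivative \<phi>' x) (at x)"
    and cont: "continuous_on {0<..} \<phi>'"
    and X: "\<And>x y. x > 0 \<Longrightarrow> (x,y) \<in> X \<longleftrightarrow> y\<^sup>2 = (\<phi> x)\<^sup>2"
  shows "is_node X (x0, 0)"
proof -
  define e where "e = x0 / 2"
  have e: "e > 0" "e \<le> x0" using x0 by (simp_all add: e_def)
  have int: "{x0 - 1*e<..<x0 + 1*e} \<subseteq> {0<..}" using x0 by (auto simp: e_def)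
  have d1: "(\<phi> has_real_derivative \<phi>' x) (at x)" if "x \<in> {x0 - 1*e<..<x0 + 1*e}" for x
    using d int that by auto
  have c1: "continuous_on {x0 - 1*e<..<x0 + 1*e} \<phi>'" using continuous_on_subset[OF cont int] .
  have d2: "((\<lambda>x. - \<phi> x) has_real_derivative - \<phi>' x) (at x)" if "x \<in> {x0 - 1*e<..<x0 + 1*e}" for x
    using DERIV_minus[OF d1[OF that]] .
  have c2: "continuous_on {x0 - 1*e<..<x0 + 1*e} (\<lambda>x. - \<phi>' x)" using c1 by (intro continuous_intros)
  show ?thesis
  proof (rule is_nodeI[OF _ _ _ _ _ near_opposite_graphs[OF X e(2)]])
    show "branch (\<lambda>t. (x0 + t, \<phi> (x0 + t))) e (x0, 0)"
      "branch (\<lambda>t. (x0 + t, - \<phi> (x0 + t))) e (x0, 0)"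
      "vector_derivative (\<lambda>t. (x0 + t, \<phi> (x0 + t))) (at 0) = (1, \<phi>' x0)"
      "vector_derivative (\<lambda>t. (x0 + t, - \<phi> (x0 + t))) (at 0) = (1, - \<phi>' x0)"
      using branch_graph[OF e(1) zero_less_one d1 c1] branch_graph[OF e(1) zero_less_one d2 c2] phi0
      by simp_all
    show "open ({x0 - e<..<x0 + e} \<times> (UNIV :: real set))" by (intro open_Times) auto
    show "(x0, 0) \<in> {x0 - e<..<x0 + e} \<times> (UNIV :: real set)" using e by simp
    show "(x0, 0) \<in> X" using X[OF x0] phi0 by simp
    show "fst (1, \<phi>' x0) * snd (1, - \<phi>' x0) - snd (1, \<phi>' x0) * fst (1, - \<phi>' x0) \<noteq> 0"
      using nz by simp
  qed
qed

lemma near_line_and_graph: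
  fixes \<phi> :: "real \<Rightarrow> real"
  assumes X: "\<And>x y. (x,y) \<in> X \<longleftrightarrow> x * ((\<phi> x)\<^sup>2 - y\<^sup>2) = 0"
    and near: "\<And>x. \<bar>x\<bar> < c * e \<Longrightarrow> \<bar>\<phi> x - \<phi> 0\<bar> < e" and e: "2 * e \<le> \<bar>\<phi> 0\<bar>" and c: "c > 0"
  shows "X \<inter> ({-(c*e)<..<c*e} \<times> {\<phi> 0 - e<..<\<phi> 0 + e}) =
    (\<lambda>t. (0, \<phi> 0 + t)) ` {-e<..<e} \<union> (\<lambda>t. (0 + c*t, \<phi> (0 + c*t))) ` {-e<..<e}"
proof (intro equalityI subsetI)
  fix q assume q: "q \<in> X \<inter> ({-(c*e)<..<c*e} \<times> {\<phi> 0 - e<..<\<phi> 0 + e})"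
  obtain x y where xy: "q = (x,y)" by (cases q)
  have x: "\<bar>x\<bar> < c * e" and y: "\<bar>y - \<phi> 0\<bar> < e" using q xy by (auto simp: abs_less_iff)
  show "q \<in> (\<lambda>t. (0, \<phi> 0 + t)) ` {-e<..<e} \<union> (\<lambda>t. (0 + c*t, \<phi> (0 + c*t))) ` {-e<..<e}"
  proof (cases "x = 0")
    case True
    thus ?thesis using y unfolding xy by (auto simp: abs_less_iff intro!: image_eqI[where x="y - \<phi> 0"])
  next
    case False
    hence "y = \<phi> x \<or> y = - \<phi> x" using q xy X by (auto simp: power2_eq_iff)
    moreover have "y \<noteq> - \<phi> x" using near[OF x] y e by linarith
    moreover have "x / c \<in> {-e<..<e}" using x c by (auto simp: abs_less_iff field_simps)
    ultimately show ?thesis unfolding xy using c by (auto intro!: image_eqI[where x="x / c"])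
  qed
next
  fix q assume "q \<in> (\<lambda>t. (0, \<phi> 0 + t)) ` {-e<..<e} \<union> (\<lambda>t. (0 + c*t, \<phi> (0 + c*t))) ` {-e<..<e}"
  then obtain t where t: "t \<in> {-e<..<e}"
    and q: "q = (0, \<phi> 0 + t) \<or> q = (c*t, \<phi> (c*t))" by auto
  have "\<bar>c*t\<bar> < c * e" using t c by (auto simp: abs_mult abs_less_iff)
  thus "q \<in> X \<inter> ({-(c*e)<..<c*e} \<times> {\<phi> 0 - e<..<\<phi> 0 + e})"
    using q t near[of "c*t"] c by (auto simp: X abs_less_iff)
qed

lemma node_of_line_and_graph:
  fixes \<phi> \<phi>' :: "real \<Rightarrow> real"
  assumes d: "\<And>x. (\<phi> has_real_derivative \<phi>' x) (at x)" and cont: "continuous_on UNIV \<phi>'"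
    and nz: "\<phi> 0 \<noteq> 0"
    and X: "\<And>x y. (x,y) \<in> X \<longleftrightarrow> x * ((\<phi> x)\<^sup>2 - y\<^sup>2) = 0"
  shows "is_node X (0, \<phi> 0)"
proof -
  define e where "e = \<bar>\<phi> 0\<bar> / 2"
  have e: "e > 0" "2 * e \<le> \<bar>\<phi> 0\<bar>" using nz by (simp_all add: e_def)
  have "isCont \<phi> 0" using d by (rule DERIV_isCont)
  then obtain \<delta> where \<delta>: "\<delta> > 0" and near: "\<And>x. \<bar>x\<bar> < \<delta> \<Longrightarrow> \<bar>\<phi> x - \<phi> 0\<bar> < e"
    using e unfolding continuous_at_eps_delta dist_real_def by force
  define c where "c = \<delta> / e"
  have c: "c > 0" "c * e = \<delta>" using \<delta> e by (simp_all add: c_def)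
  show ?thesis
  proof (rule is_nodeI[OF _ _ _ _ _ near_line_and_graph[OF X _ e(2) c(1)]])
    show "branch (\<lambda>t. (0::real, \<phi> 0 + t)) e (0, \<phi> 0)"
      "vector_derivative (\<lambda>t. (0::real, \<phi> 0 + t)) (at 0) = (0, 1)"
      using branch_vertical_line[OF e(1), of 0 "\<phi> 0"] by simp_all
    show "branch (\<lambda>t. (0 + c*t, \<phi> (0 + c*t))) e (0, \<phi> 0)"
      "vector_derivative (\<lambda>t. (0 + c*t, \<phi> (0 + c*t))) (at 0) = (c, c * \<phi>' 0)"
      using branch_graph[where a=0, OF e(1) c(1) d continuous_on_subset[OF cont]] by simp_all
    show "\<bar>\<phi> x - \<phi> 0\<bar> < e" if "\<bar>x\<bar> < c * e" for x using near that c(2) by simp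
    show "open ({-(c*e)<..<c*e} \<times> {\<phi> 0 - e<..<\<phi> 0 + e})" by (intro open_Times) auto
    show "(0, \<phi> 0) \<in> {-(c*e)<..<c*e} \<times> {\<phi> 0 - e<..<\<phi> 0 + e}" using \<delta> c e by simp
    show "(0, \<phi> 0) \<in> X" by (simp add: X)
    show "fst (0::real, 1::real) * snd (c, c * \<phi>' 0) - snd (0::real, 1::real) * fst (c, c * \<phi>' 0) \<noteq> 0"
      using c by simp
  qed
qed

lemma node_XR_W_A_axis:
  assumes "k \<ge> 1" shows "is_node (XR_W A_half_inf) ((real k * pi)\<^sup>2, 0)"
proof (rule node_of_opposite_graphs)
  let ?x0 = "(real k * pi)\<^sup>2"
  show "0 < ?x0" using assms by simp
  show "sqrt ?x0 * s_re ?x0 = 0" using assms by (simp add: s_re_square_pi)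
  show "((\<lambda>x. sqrt x * s_re x) has_real_derivative inverse (sqrt x) / 2 * s_re x + s_re' x * sqrt x) (at x)"
    if "x > 0" for x
    by (rule DERIV_mult[OF DERIV_real_sqrt[OF that] s_re_has_derivative])
  show "continuous_on {0<..} (\<lambda>x. inverse (sqrt x) / 2 * s_re x + s_re' x * sqrt x)"
    by (intro continuous_intros continuous_on_subset[OF continuous_on_s_re]
        continuous_on_subset[OF continuous_on_s_re']) auto
  show "inverse (sqrt ?x0) / 2 * s_re ?x0 + s_re' ?x0 * sqrt ?x0 \<noteq> 0"
    using assms s_re'_square_pi[of k] by (simp add: s_re_square_pi)
  show "(x, y) \<in> XR_W A_half_inf \<longleftrightarrow> y\<^sup>2 = (sqrt x * s_re x)\<^sup>2" if "x > 0" for x y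
    using that by (auto simp: XR_W_eq fR_W_A g_re_def power_mult_distrib)
qed

lemma node_XR_W_D_axis:
  assumes "k \<ge> 1" shows "is_node (XR_W D_half_inf) ((real k * pi)\<^sup>2, 0)"
proof (rule node_of_opposite_graphs[where \<phi>=s_re and \<phi>'=s_re'])
  show "(x, y) \<in> XR_W D_half_inf \<longleftrightarrow> y\<^sup>2 = (s_re x)\<^sup>2" if "x > 0" for x y
    using that by (auto simp: XR_W_D_iff)
qed (use assms s_re'_square_pi[of k] in \<open>auto simp: s_re_square_pi s_re_has_derivative
       intro: continuous_on_subset[OF continuous_on_s_re']\<close>)

lemma node_XR_W_D_vertical:
  assumes "\<sigma>\<^sup>2 = 1" shows "is_node (XR_W D_half_inf) (0, \<sigma>)"
proof -
  have "is_node (XR_W D_half_inf) (0, \<sigma> * s_re 0)"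
  proof (rule node_of_line_and_graph)
    show "((\<lambda>x. \<sigma> * s_re x) has_real_derivative \<sigma> * s_re' x) (at x)" for x
      by (rule DERIV_cmult[OF s_re_has_derivative])
    show "continuous_on UNIV (\<lambda>x. \<sigma> * s_re' x)"
      by (intro continuous_intros continuous_on_s_re')
    show "(x, y) \<in> XR_W D_half_inf \<longleftrightarrow> x * ((\<sigma> * s_re x)\<^sup>2 - y\<^sup>2) = 0" for x y
      using assms by (simp add: XR_W_D_iff power_mult_distrib)
  qed (use assms in auto)
  thus ?thesis by simp
qed

lemma node_XR_W_imp_crit:
  assumes node: "is_node (XR_W W) p" shows "realpt p \<in> crit_W W"
proof -
  obtain x y where p: "p = (x,y)" by (cases p)
  have X: "XR_W W = {q. fR_W W q = 0}" by (rule XR_W_eq)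
  have s4: "s_fun (4 * fst (realpt p)) = of_real (s_re (4*x))"
    using s_fun_of_real[of "4*x"] by (simp add: p realpt_def)
  show ?thesis
  proof (cases W)
    case A_half_inf
    have "fR_W W = (\<lambda>q. g_re (fst q) - (snd q)\<^sup>2)" by (auto simp: A_half_inf fR_W_A)
    hence "(fR_W W has_derivative (\<lambda>h. s_re (4 * x) * fst h + (- 2 * y) * snd h)) (at p)"
      using has_derivative_A_shape[OF g_re_has_derivative, of p] by (simp add: p)
    from node_imp_derivative_zero[OF node[unfolded X] this]
    show ?thesis unfolding A_half_inf crit_W_A_iff using s4 by (simp add: p realpt_def)
  next
    case D_half_inf
    have "fR_W W = (\<lambda>q. g_re (fst q) - fst q * (snd q)\<^sup>2)" by (auto simp: D_half_inf fR_W_D)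
    hence "(fR_W W has_derivative (\<lambda>h. (s_re (4 * x) - y\<^sup>2) * fst h + (- 2 * x * y) * snd h)) (at p)"
      using has_derivative_D_shape[OF g_re_has_derivative, of p] by (simp add: p)
    from node_imp_derivative_zero[OF node[unfolded X] this]
    show ?thesis unfolding D_half_inf crit_W_D_iff using s4 by (simp add: p realpt_def)
  qed
qed

lemma nodes_XR_W_eq: "{p. is_node (XR_W W) p} = {q \<in> crit_real W. fR_W W q = 0}"
proof (intro equalityI subsetI CollectI conjI)
  fix p assume "p \<in> {p. is_node (XR_W W) p}"
  hence node: "is_node (XR_W W) p" by simp
  show "p \<in> crit_real W"
    using node_XR_W_imp_crit[OF node] unfolding crit_W_eq by (auto simp: realpt_eq_iff)
  show "fR_W W p = 0" using node by (simp add: is_node_def XR_W_eq)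
next
  fix q assume "q \<in> {q \<in> crit_real W. fR_W W q = 0}"
  hence q: "q \<in> crit_real W" "fR_W W q = 0" by simp_all
  show "is_node (XR_W W) q"
  proof (cases "q \<in> axis_point ` {1..}")
    case True
    then obtain m where m: "m \<ge> 1" "q = axis_point m" by auto
    hence "even m" using q fR_W_axis_point[of m W] by (auto split: if_splits)
    then obtain k where k: "m = 2*k" by blast
    hence "k \<ge> 1" "q = ((real k * pi)\<^sup>2, 0)" using m by (simp_all add: axis_point_def)
    thus ?thesis using node_XR_W_A_axis node_XR_W_D_axis by (cases W) auto
  next
    case False
    thus ?thesis using q node_XR_W_D_vertical by (auto simp: crit_real_def split: if_splits)
  qed
qed

section \<open>Bounded components of the complement\<close>

definition profile :: "W_type \<Rightarrow> real \<Rightarrow> real" where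
  "profile W x = (case W of A_half_inf \<Rightarrow> g_re x | D_half_inf \<Rightarrow> (s_re x)\<^sup>2)"

lemma XR_W_pos_iff:
  assumes "x > 0" shows "(x,y) \<in> XR_W W \<longleftrightarrow> y\<^sup>2 = profile W x"
proof (cases W)
  case A_half_inf
  thus ?thesis by (auto simp: XR_W_eq fR_W_A profile_def)
next
  case D_half_inf
  thus ?thesis using assms by (auto simp: XR_W_D_iff profile_def)
qed

lemma continuous_on_profile: "continuous_on UNIV (profile W)"
  by (cases W) (simp_all add: profile_def[abs_def] continuous_on_g_re continuous_on_power
      continuous_on_s_re)

lemma profile_square_pi: "k \<ge> 1 \<Longrightarrow> profile W ((real k * pi)\<^sup>2) = 0"
  by (cases W) (simp_all add: profile_def g_re_def s_re_square_pi)

lemma profile_le_1: assumes "x > 0" shows "profile W x \<le> 1"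
proof -
  have r: "sqrt x > 0" using assms by simp
  have "\<bar>sin (sqrt x)\<bar> \<le> \<bar>sqrt x\<bar>" by (rule abs_sin_x_le_abs_x)
  hence "\<bar>s_re x\<bar> \<le> 1" using assms r by (simp add: s_re_pos abs_divide divide_le_eq_1)
  moreover have "g_re x = (sin (sqrt x))\<^sup>2"
    using assms r by (simp add: g_re_def s_re_pos power_divide)
  ultimately show ?thesis
    by (cases W) (simp_all add: profile_def abs_square_le_1 abs_square_le_1[THEN iffD2])
qed

lemma pos_if_sqrt_gt:
  assumes "real k * pi < sqrt x" shows "x > 0"
  using assms by (smt (verit) pi_gt_zero of_nat_0_le_iff real_sqrt_le_0_iff zero_le_mult_iff)

lemma s_re_nonzero_between:
  assumes "real k * pi < sqrt x" "sqrt x < (real k + 1) * pi"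
  shows "s_re x \<noteq> 0"
proof
  assume "s_re x = 0"
  moreover have "x > 0" using assms(1) by (rule pos_if_sqrt_gt)
  ultimately have "sin (sqrt x) = 0" by (simp add: s_re_pos)
  then obtain i :: int where i: "sqrt x = of_int i * pi" using sin_zero_iff_int2 by blast
  hence "of_int (int k) < (of_int i :: real)" "(of_int i :: real) < of_int (int k + 1)"
    using assms by simp_all
  hence "int k < i" "i < int k + 1" by (simp_all only: of_int_less_iff)
  thus False by linarith
qed

lemma profile_pos_between:
  assumes "real k * pi < sqrt x" "sqrt x < (real k + 1) * pi"
  shows "profile W x > 0"
proof -
  have "x > 0" using assms(1) by (rule pos_if_sqrt_gt)
  thus ?thesis using s_re_nonzero_between[OF assms]
    by (cases W) (simp_all add: profile_def g_re_def)
qed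

lemma s_re_nonpos_nonzero: assumes "z \<le> 0" shows "s_re z \<noteq> 0"
proof
  assume "s_re z = 0"
  hence "s_fun (of_real z) = 0" by (simp add: s_fun_of_real)
  then obtain n :: int where n: "n \<noteq> 0" "of_real z = (of_real (of_int n * pi) :: complex)\<^sup>2"
    using s_fun_eq_0_iff by blast
  hence "z = (of_int n * pi)\<^sup>2" by (metis of_real_eq_iff of_real_power)
  moreover have "(of_int n * pi)\<^sup>2 > 0" using n(1) by simp
  ultimately show False using assms by simp
qed

lemma square_between_iff:
  "(real k * pi)\<^sup>2 < x \<and> x < ((real k + 1) * pi)\<^sup>2 \<longleftrightarrow>
   real k * pi < sqrt x \<and> sqrt x < (real k + 1) * pi"
proof
  assume h: "(real k * pi)\<^sup>2 < x \<and> x < ((real k + 1) * pi)\<^sup>2"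
  hence "sqrt ((real k * pi)\<^sup>2) < sqrt x" "sqrt x < sqrt (((real k + 1) * pi)\<^sup>2)"
    using real_sqrt_less_mono by blast+
  thus "real k * pi < sqrt x \<and> sqrt x < (real k + 1) * pi" by simp
next
  assume h: "real k * pi < sqrt x \<and> sqrt x < (real k + 1) * pi"
  hence x: "x > 0" using pos_if_sqrt_gt[of k x] by simp
  moreover have "(real k * pi)\<^sup>2 < (sqrt x)\<^sup>2" "(sqrt x)\<^sup>2 < ((real k + 1) * pi)\<^sup>2"
    using h x by (intro power_strict_mono; simp)+
  ultimately show "(real k * pi)\<^sup>2 < x \<and> x < ((real k + 1) * pi)\<^sup>2" by simp
qed

definition lens :: "W_type \<Rightarrow> nat \<Rightarrow> (real \<times> real) set" where
  "lens W k = {p. (real k * pi)\<^sup>2 < fst p \<and> fst p < ((real k + 1) * pi)\<^sup>2 \<and> (snd p)\<^sup>2 < profile W (fst p)}"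

lemma mem_lens_iff:
  "(x,y) \<in> lens W k \<longleftrightarrow> real k * pi < sqrt x \<and> sqrt x < (real k + 1) * pi \<and> y\<^sup>2 < profile W x"
  unfolding lens_def using square_between_iff[of k x] by auto

lemma open_lens: "open (lens W k)"
  unfolding lens_def
  by (intro open_Collect_conj open_Collect_less continuous_intros
      continuous_on_compose2[OF continuous_on_profile]) auto

lemma lens_subset_compl_XR_W: "lens W k \<subseteq> - XR_W W"
proof
  fix p assume p: "p \<in> lens W k"
  obtain x y where xy: "p = (x,y)" by (cases p)
  have "x > 0" "y\<^sup>2 < profile W x" using p xy pos_if_sqrt_gt by (auto simp: mem_lens_iff)
  thus "p \<in> - XR_W W" using XR_W_pos_iff[of x y W] xy by auto
qed

lemma bounded_lens: "bounded (lens W k)"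
proof -
  have "lens W k \<subseteq> {(real k * pi)\<^sup>2..((real k + 1) * pi)\<^sup>2} \<times> {-1..1}"
  proof
    fix p assume p: "p \<in> lens W k"
    obtain x y where xy: "p = (x,y)" by (cases p)
    have "x > 0" using p xy pos_if_sqrt_gt by (auto simp: mem_lens_iff)
    hence "y\<^sup>2 < 1" using p xy profile_le_1[of x W] unfolding lens_def by auto
    hence "\<bar>y\<bar> < 1" by (simp add: abs_square_less_1)
    thus "p \<in> {(real k * pi)\<^sup>2..((real k + 1) * pi)\<^sup>2} \<times> {-1..1}"
      using p xy unfolding lens_def by auto
  qed
  thus ?thesis by (rule bounded_subset[rotated]) (intro bounded_Times bounded_closed_interval)
qed

text \<open>The lens is the image of a rectangle under \<open>(x, t) \<mapsto> (x, t * sqrt (profile W x))\<close>.\<close>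
lemma connected_lens: "connected (lens W k)"
proof -
  define R where "R = {(real k * pi)\<^sup>2<..<((real k + 1) * pi)\<^sup>2} \<times> {-1<..<(1::real)}"
  define h where "h = (\<lambda>p::real\<times>real. (fst p, snd p * sqrt (profile W (fst p))))"
  have "connected R" unfolding R_def
    by (intro convex_connected convex_Times convex_box) (simp_all add: convex_real_interval)
  moreover have "continuous_on R h" unfolding h_def
    by (intro continuous_intros continuous_on_compose2[OF continuous_on_profile]) auto
  ultimately have c: "connected (h ` R)" by (metis connected_continuous_image)
  have "h ` R = lens W k"
  proof (intro equalityI subsetI)
    fix p assume "p \<in> h ` R"
    then obtain x t where x: "(x, 0) \<in> lens W k" and t: "\<bar>t\<bar> < 1"
      and p: "p = (x, t * sqrt (profile W x))"
      by (auto simp: R_def h_def lens_def abs_less_iff square_between_iff profile_pos_between)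
    have q: "profile W x > 0" using x profile_pos_between by (auto simp: mem_lens_iff)
    have "t\<^sup>2 < 1" using t by (simp add: abs_square_less_1)
    hence "(t * sqrt (profile W x))\<^sup>2 < profile W x" using q by (simp add: power_mult_distrib)
    thus "p \<in> lens W k" using x p by (simp add: lens_def)
  next
    fix p assume p: "p \<in> lens W k"
    obtain x y where xy: "p = (x,y)" by (cases p)
    have q: "profile W x > 0" using p xy profile_pos_between by (auto simp: mem_lens_iff)
    define t where "t = y / sqrt (profile W x)"
    have sq: "sqrt (profile W x) > 0" using q by simp
    have "\<bar>y\<bar> < sqrt (profile W x)"
      using p xy q by (simp add: lens_def real_less_rsqrt abs_less_iff)
    hence "\<bar>t\<bar> < 1" using sq by (simp add: t_def abs_divide)
    moreover have "y = t * sqrt (profile W x)" using sq by (simp add: t_def)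
    ultimately show "p \<in> h ` R" using p xy
      by (auto simp: R_def h_def lens_def abs_less_iff intro!: image_eqI[where x="(x,t)"])
  qed
  thus ?thesis using c by simp
qed

lemma connected_component_eq_open_part:
  assumes "connected L" "open L" "open V" "L \<inter> V = {}" "L \<subseteq> S" "S \<subseteq> L \<union> V" "p \<in> L"
  shows "connected_component_set S p = L"
proof
  show "L \<subseteq> connected_component_set S p"
    by (rule connected_component_maximal[OF assms(7,1,5)])
  let ?C = "connected_component_set S p"
  have C: "?C \<subseteq> L \<union> V" using connected_component_subset assms(6) by (rule subset_trans)
  have "p \<in> L \<inter> ?C" using assms(5,7) by (auto intro: connected_component_refl)
  moreover have "L \<inter> V \<inter> ?C = {}" using assms(4) by simp
  ultimately have "V \<inter> ?C = {}"
    using connectedD[OF connected_connected_component assms(2,3) _ C] by blast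
  thus "?C \<subseteq> L" using C by blast
qed

text \<open>Between two consecutive zeros \<open>(k \<pi>)\<^sup>2\<close> of the profile, a point off the curve and not
  above it lies in the lens; on the line \<open>x = 0\<close> every point lies on the curve or above it.\<close>
lemma mem_lens_if_below_profile:
  assumes nX: "(x,y) \<notin> XR_W W" and k: "real k * pi \<le> sqrt x" "sqrt x \<le> (real k + 1) * pi"
    and below: "y\<^sup>2 \<le> profile W x"
  shows "(x,y) \<in> lens W k"
proof (cases "x > 0")
  case False
  hence "sqrt x \<le> 0" by simp
  moreover have "0 \<le> real k * pi" by simp
  ultimately have "sqrt x = 0" using k(1) by linarith
  hence "x = 0" by simp
  hence "(x,y) \<in> XR_W W" using below
    by (cases W) (simp_all add: XR_W_eq fR_W_A fR_W_D_vertical profile_def g_re_def)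
  thus ?thesis using nX by simp
next
  case True
  have ne: "y\<^sup>2 \<noteq> profile W x" using nX XR_W_pos_iff[OF True] by simp
  have not_zero: "sqrt x \<noteq> real j * pi" if "j \<ge> 1" for j
  proof
    assume "sqrt x = real j * pi"
    hence "(sqrt x)\<^sup>2 = (real j * pi)\<^sup>2" by simp
    hence "x = (real j * pi)\<^sup>2" using True by simp
    thus False using below ne profile_square_pi[OF that, of W] by simp
  qed
  have "real k * pi < sqrt x"
    using k(1) True not_zero[of k] by (cases "k = 0") (simp_all add: order.not_eq_order_implies_strict)
  moreover have "sqrt x < (real k + 1) * pi"
    using k(2) not_zero[of "k + 1"] by (simp add: order.not_eq_order_implies_strict add.commute)
  ultimately show ?thesis using below ne by (simp add: mem_lens_iff)
qed

lemma connected_component_lens: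
  assumes p: "p \<in> lens W k"
  shows "connected_component_set (- XR_W W) p = lens W k"
proof (rule connected_component_eq_open_part)
  define V where "V = {p. sqrt (fst p) < real k * pi} \<union> {p. (real k + 1) * pi < sqrt (fst p)} \<union>
                      {p. profile W (fst p) < (snd p)\<^sup>2}"
  show "open V" unfolding V_def
    by (intro open_Un open_Collect_less continuous_intros
        continuous_on_compose2[OF continuous_on_profile]) auto
  show "lens W k \<inter> V = {}" by (force simp: V_def mem_lens_iff)
  show "- XR_W W \<subseteq> lens W k \<union> V"
    using mem_lens_if_below_profile by (force simp: V_def not_less)
qed (use p in \<open>simp_all add: connected_lens open_lens lens_subset_compl_XR_W\<close>)

lemma unbounded_ray:
  fixes a v :: "'a::real_normed_vector"
  assumes "v \<noteq> 0" shows "\<not> bounded ((\<lambda>t. a + t *\<^sub>R v) ` {0..})"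
proof
  assume "bounded ((\<lambda>t. a + t *\<^sub>R v) ` {0..})"
  then obtain B where B: "\<And>t. t \<ge> 0 \<Longrightarrow> norm (a + t *\<^sub>R v) \<le> B" by (auto simp: bounded_iff)
  define t where "t = (\<bar>B\<bar> + norm a + 1) / norm v"
  have t: "t \<ge> 0" "t * norm v = \<bar>B\<bar> + norm a + 1" using assms by (simp_all add: t_def)
  have "t * norm v \<le> norm (a + t *\<^sub>R v) + norm a"
    using norm_triangle_ineq2[of "t *\<^sub>R v" "-a"] t(1) by (simp add: add.commute)
  thus False using B[OF t(1)] t(2) by linarith
qed

lemma unbounded_connected_component:
  assumes "connected T" "p \<in> T" "T \<subseteq> S" "\<not> bounded T"
  shows "\<not> bounded (connected_component_set S p)"
  using connected_component_maximal[OF assms(2,1,3)] assms(4) bounded_subset by blast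

lemma unbounded_component_vertical_ray:
  fixes x y :: real
  assumes "\<And>y'. y\<^sup>2 \<le> y'\<^sup>2 \<Longrightarrow> (x, y') \<in> S"
  shows "\<not> bounded (connected_component_set S (x, y))"
proof (rule unbounded_connected_component)
  define \<sigma> :: real where "\<sigma> = (if y \<ge> 0 then 1 else -1)"
  let ?T = "(\<lambda>t. (x, y) + t *\<^sub>R (0, \<sigma>)) ` {0..}"
  show "connected ?T" by (intro connected_continuous_image continuous_intros) simp
  show "(x, y) \<in> ?T" by (auto intro!: image_eqI[where x=0])
  show "\<not> bounded ?T" by (rule unbounded_ray) (simp add: \<sigma>_def zero_prod_def)
  show "?T \<subseteq> S"
  proof
    fix q assume "q \<in> ?T"
    then obtain t where t: "t \<ge> 0" "q = (x, y + t * \<sigma>)" by auto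
    have "\<bar>y\<bar> \<le> \<bar>y + t * \<sigma>\<bar>" using t(1) by (simp add: \<sigma>_def)
    hence "y\<^sup>2 \<le> (y + t * \<sigma>)\<^sup>2" by (simp add: abs_le_square_iff)
    thus "q \<in> S" using assms t(2) by simp
  qed
qed

text \<open>For \<open>x < 0\<close> the curve \<open>X_D\<close> is the pair of graphs \<open>y = \<plusminus>s x\<close> with \<open>s \<noteq> 0\<close> there,
  so a point between them escapes along the negative \<open>x\<close>-axis.\<close>
lemma unbounded_component_D_left:
  assumes x: "x < 0" and y: "y\<^sup>2 < (s_re x)\<^sup>2"
  shows "\<not> bounded (connected_component_set (- XR_W D_half_inf) (x,y))"
proof (rule unbounded_connected_component)
  let ?T1 = "(\<lambda>\<tau>. (x, \<tau> * y)) ` {0..1}"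
  let ?T2 = "(\<lambda>t. (x, 0) + t *\<^sub>R (-1, 0::real)) ` {0..}"
  have "connected ?T1" "connected ?T2"
    by (intro connected_continuous_image continuous_intros; simp)+
  moreover have "(x,0) \<in> ?T1 \<inter> ?T2" by (force intro!: image_eqI[where x=0])
  ultimately show "connected (?T1 \<union> ?T2)" by (intro connected_Un) auto
  show "(x,y) \<in> ?T1 \<union> ?T2" by (force intro!: image_eqI[where x=1])
  have "\<not> bounded ?T2" by (rule unbounded_ray) (simp add: zero_prod_def)
  thus "\<not> bounded (?T1 \<union> ?T2)" using bounded_subset by blast
  have "(x, \<tau> * y) \<notin> XR_W D_half_inf" if "0 \<le> \<tau>" "\<tau> \<le> 1" for \<tau>
  proof -
    have "\<tau>\<^sup>2 * y\<^sup>2 \<le> y\<^sup>2" using that by (intro mult_left_le_one_le) (auto intro: power_le_one)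
    hence "(\<tau> * y)\<^sup>2 < (s_re x)\<^sup>2" using y by (simp add: power_mult_distrib)
    thus ?thesis using x by (simp add: XR_W_D_iff)
  qed
  moreover have "(x - t, 0) \<notin> XR_W D_half_inf" if "t \<ge> 0" for t
    using that x s_re_nonpos_nonzero[of "x - t"] by (simp add: XR_W_D_iff)
  ultimately show "?T1 \<union> ?T2 \<subseteq> - XR_W D_half_inf" by auto
qed

lemma above_profile_if_outside_lenses:
  assumes x: "x > 0" and nX: "(x,y) \<notin> XR_W W" and nl: "\<And>k. (x,y) \<notin> lens W k"
  shows "profile W x < y\<^sup>2"
proof (rule ccontr)
  assume "\<not> profile W x < y\<^sup>2"
  moreover define k where "k = nat \<lfloor>sqrt x / pi\<rfloor>"
  moreover have "real k = of_int \<lfloor>sqrt x / pi\<rfloor>" using x by (simp add: k_def)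
  hence "real k \<le> sqrt x / pi" "sqrt x / pi \<le> real k + 1" by linarith+
  hence "real k * pi \<le> sqrt x" "sqrt x \<le> (real k + 1) * pi" by (simp_all add: field_simps)
  ultimately show False using mem_lens_if_below_profile[OF nX] nl by simp
qed

lemma unbounded_component_outside_lenses_A:
  assumes nX: "(x,y) \<notin> XR_W A_half_inf" and nl: "\<And>k. (x,y) \<notin> lens A_half_inf k"
  shows "\<not> bounded (connected_component_set (- XR_W A_half_inf) (x,y))"
proof (rule unbounded_component_vertical_ray)
  have X: "(a,b) \<in> XR_W A_half_inf \<longleftrightarrow> b\<^sup>2 = g_re a" for a b
    by (auto simp: XR_W_eq fR_W_A)
  have "g_re x < y\<^sup>2"
  proof (cases "x > 0")
    case True
    thus ?thesis using above_profile_if_outside_lenses[OF True nX nl] by (simp add: profile_def)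
  next
    case False
    hence "g_re x \<le> 0" by (simp add: g_re_def mult_nonpos_nonneg)
    moreover have "y\<^sup>2 \<noteq> g_re x" using nX X by simp
    ultimately show ?thesis by (smt (verit) zero_le_power2)
  qed
  thus "(x, y') \<in> - XR_W A_half_inf" if "y\<^sup>2 \<le> y'\<^sup>2" for y'
    using that X by simp
qed

lemma unbounded_component_outside_lenses_D:
  assumes nX: "(x,y) \<notin> XR_W D_half_inf" and nl: "\<And>k. (x,y) \<notin> lens D_half_inf k"
  shows "\<not> bounded (connected_component_set (- XR_W D_half_inf) (x,y))"
proof -
  have x0: "x \<noteq> 0" and ne: "y\<^sup>2 \<noteq> (s_re x)\<^sup>2" using nX by (auto simp: XR_W_D_iff)
  show ?thesis
  proof (cases "(s_re x)\<^sup>2 < y\<^sup>2")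
    case True
    thus ?thesis using x0 by (intro unbounded_component_vertical_ray) (simp add: XR_W_D_iff)
  next
    case False
    hence y: "y\<^sup>2 < (s_re x)\<^sup>2" using ne by simp
    have "\<not> x > 0"
      using above_profile_if_outside_lenses[OF _ nX nl] y by (auto simp: profile_def)
    hence "x < 0" using x0 by simp
    thus ?thesis using y by (rule unbounded_component_D_left)
  qed
qed

lemma unbounded_component_outside_lenses:
  assumes "p \<notin> XR_W W" and "\<And>k. p \<notin> lens W k"
  shows "\<not> bounded (connected_component_set (- XR_W W) p)"
  using assms unbounded_component_outside_lenses_A unbounded_component_outside_lenses_D
  by (cases p; cases W) auto

lemma axis_point_odd: "axis_point (2*k+1) = (((real k + 1/2) * pi)\<^sup>2, 0)"
  unfolding axis_point_def by (simp add: field_simps)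

lemma axis_point_odd_mem_lens_iff: "axis_point (2*k+1) \<in> lens W j \<longleftrightarrow> j = k"
proof -
  let ?r = "(real k + 1/2) * pi"
  have "real j * pi < ?r \<and> ?r < (real j + 1) * pi \<longleftrightarrow> j = k"
  proof -
    have "real j * pi < ?r \<and> ?r < (real j + 1) * pi \<longleftrightarrow> real j < real k + 1/2 \<and> real k + 1/2 < real j + 1"
      by simp
    also have "\<dots> \<longleftrightarrow> j = k" by linarith
    finally show ?thesis .
  qed
  moreover have "real k * pi < ?r" "?r < (real k + 1) * pi" by (simp_all add: field_simps)
  hence "profile W (?r\<^sup>2) > 0" using profile_pos_between[of k "?r\<^sup>2"] by simp
  moreover have "sqrt (?r\<^sup>2) = ?r" by simp
  ultimately show ?thesis unfolding axis_point_odd mem_lens_iff by auto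
qed

lemma axis_point_odd_mem_lens: "axis_point (2*k+1) \<in> lens W k"
  using axis_point_odd_mem_lens_iff by blast

lemma lens_eq_iff: "lens W k = lens W j \<longleftrightarrow> k = j"
  by (metis axis_point_odd_mem_lens axis_point_odd_mem_lens_iff)

lemma bounded_components_eq_lenses:
  "{B \<in> components (- XR_W W). bounded B} = range (lens W)"
proof (intro equalityI subsetI)
  fix B assume B: "B \<in> {B \<in> components (- XR_W W). bounded B}"
  then obtain p where p: "p \<in> - XR_W W" "B = connected_component_set (- XR_W W) p"
    by (auto simp: components_iff)
  then obtain k where "p \<in> lens W k"
    using B unbounded_component_outside_lenses[of p W] by auto
  thus "B \<in> range (lens W)" using connected_component_lens p(2) by auto
next
  fix B assume "B \<in> range (lens W)"
  then obtain k where k: "B = lens W k" by auto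
  have "axis_point (2*k+1) \<in> - XR_W W"
    using lens_subset_compl_XR_W axis_point_odd_mem_lens by blast
  moreover have "B = connected_component_set (- XR_W W) (axis_point (2*k+1))"
    using connected_component_lens[OF axis_point_odd_mem_lens] k by simp
  ultimately have "B \<in> components (- XR_W W)" unfolding components_iff by blast
  thus "B \<in> {B \<in> components (- XR_W W). bounded B}" using bounded_lens k by simp
qed

lemma crit_real_value_1: "{q \<in> crit_real W. fR_W W q = 1} = range (\<lambda>k. axis_point (2*k+1))"
proof (intro equalityI subsetI)
  fix q assume q: "q \<in> {q \<in> crit_real W. fR_W W q = 1}"
  show "q \<in> range (\<lambda>k. axis_point (2*k+1))"
  proof (cases "q \<in> axis_point ` {1..}")
    case True
    then obtain m where m: "m \<ge> 1" "q = axis_point m" by auto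
    hence "odd m" using q fR_W_axis_point[OF m(1), of W] by (auto split: if_splits)
    then obtain k where "m = 2*k+1" using oddE by blast
    thus ?thesis using m by auto
  next
    case False
    thus ?thesis using q fR_W_D_vertical by (auto simp: crit_real_def split: if_splits)
  qed
next
  fix q assume "q \<in> range (\<lambda>k. axis_point (2*k+1))"
  then obtain k where k: "q = axis_point (2*k+1)" by auto
  thus "q \<in> {q \<in> crit_real W. fR_W W q = 1}"
    using fR_W_axis_point[of "2*k+1" W] by (auto simp: crit_real_def)
qed

lemma hessian_crit_real:
  assumes "q \<in> crit_real W"
  shows "nondegenerate (hessian (fR_W W) q)"
    and "fR_W W q = 0 \<Longrightarrow> indefinite (hessian (fR_W W) q)"
    and "fR_W W q = 1 \<Longrightarrow> neg_definite (hessian (fR_W W) q)"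
proof -
  consider m where "m \<ge> 1" "q = axis_point m" | \<sigma> where "W = D_half_inf" "q = (0, \<sigma>)" "\<sigma>\<^sup>2 = 1"
    using assms by (auto simp: crit_real_def split: if_splits)
  then have "nondegenerate (hessian (fR_W W) q) \<and>
    (fR_W W q = 0 \<longrightarrow> indefinite (hessian (fR_W W) q)) \<and>
    (fR_W W q = 1 \<longrightarrow> neg_definite (hessian (fR_W W) q))"
  proof cases
    case 1
    thus ?thesis using hessian_axis_point[OF 1(1), of W] fR_W_axis_point[OF 1(1), of W] by simp
  next
    case 2
    thus ?thesis using hessian_D_vertical fR_W_D_vertical by simp
  qed
  thus "nondegenerate (hessian (fR_W W) q)"
    "fR_W W q = 0 \<Longrightarrow> indefinite (hessian (fR_W W) q)"
    "fR_W W q = 1 \<Longrightarrow> neg_definite (hessian (fR_W W) q)" by simp_all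
qed

theorem theorem2:
  fixes W :: W_type
  defines "C0 \<equiv> crit_W W \<inter> f_W W -` {0}"
      and "C1 \<equiv> crit_W W \<inter> f_W W -` {1}"
  shows "crit_W W \<subseteq> range realpt \<and>
     (\<forall>c\<in>crit_W W. nondegenerate (hessian (fR_W W) (Re (fst c), Re (snd c)))) \<and>
     (\<forall>c\<in>C0. indefinite (hessian (fR_W W) (Re (fst c), Re (snd c)))) \<and>
     (\<forall>c\<in>C1. neg_definite (hessian (fR_W W) (Re (fst c), Re (snd c)))) \<and>
     C0 = realpt ` {p. is_node (XR_W W) p} \<and>
     bij_betw (\<lambda>c. connected_component_set (- XR_W W) (Re (fst c), Re (snd c))) C1
           {B \<in> components (- XR_W W). bounded B}"
proof -
  have level: "crit_W W \<inter> f_W W -` {of_real v} = realpt ` {q \<in> crit_real W. fR_W W q = v}" for v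
    by (auto simp: crit_W_eq f_W_realpt)
  have C0: "C0 = realpt ` {q \<in> crit_real W. fR_W W q = 0}"
    using level[of 0] by (simp add: C0_def)
  have C1: "C1 = realpt ` {q \<in> crit_real W. fR_W W q = 1}"
    using level[of 1] by (simp add: C1_def)
  also have "\<dots> = (\<lambda>k. realpt (axis_point (2*k+1))) ` UNIV"
    unfolding crit_real_value_1 image_image ..
  finally have C1_odd: "C1 = (\<lambda>k. realpt (axis_point (2*k+1))) ` UNIV" .
  let ?B = "\<lambda>c. connected_component_set (- XR_W W) (Re (fst c), Re (snd c))"
  have "?B (realpt (axis_point (2*k+1))) = lens W k" for k
    unfolding Re_realpt by (rule connected_component_lens[OF axis_point_odd_mem_lens])
  hence "bij_betw ?B C1 (range (lens W))"
    unfolding C1_odd by (auto simp: bij_betw_def inj_on_def lens_eq_iff image_image)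
  thus ?thesis
    using C0 C1 hessian_crit_real nodes_XR_W_eq bounded_components_eq_lenses[of W]
    by (auto simp: crit_W_eq)
qed

end
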